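(* Let $n\ge 2$ and $0\le r\le n-1$ be integers and let $B_r=X^{(\le r)}\cup\{B\in X^{(r+1)}\cup X^{(r+2)}: \{1,2\}\subseteq B\}\subseteq Q_n$. Then $|B_r|=g_r=\sum_{j=0}^{r}\binom{n}{j}+\binom{n-1}{r}$, and $B_r$ is extremal, i.e. $N^t(B_r)$ and $N^t(B_r^c)$ are minimal for every integer $t>0$.
   Context: $X=[n]=\{1,\dots,n\}$, $X^{(j)}=\{B\subseteq X:|B|=j\}$, $X^{(\le j)}=\bigcup_{i\le j}X^{(i)}$. $Q_n$ is the hypercube with vertex set the power set of $[n]$ and metric $d(x,y)=|x\Delta y|$. For $A\subseteq Q_n$ and $t>0$, $N^t(A)=\{x\in Q_n:\min_{y\in A}d(x,y)\le t\}$; $N^t(A)$ is minimal if $|N^t(A)|\le |N^t(B)|$ for all $B\subseteq Q_n$ with $|B|=|A|$. $A$ is extremal if $N^t(A)$ and $N^t(Q_n\setminus A)$ are minimal for all $t>0$. *)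

theory Defs
  imports Main
begin

definition cube :: "nat \<Rightarrow> nat set set" where
  "cube n = Pow {1..n}"

definition hdist :: "nat set \<Rightarrow> nat set \<Rightarrow> nat" where
  "hdist x y = card ((x - y) \<union> (y - x))"

definition nbhd :: "nat \<Rightarrow> nat \<Rightarrow> nat set set \<Rightarrow> nat set set" where
  "nbhd n t A = {x \<in> cube n. \<exists>y\<in>A. hdist x y \<le> t}"

definition nbhd_minimal :: "nat \<Rightarrow> nat \<Rightarrow> nat set set \<Rightarrow> bool" where
  "nbhd_minimal n t A \<longleftrightarrow>
     (\<forall>B. B \<subseteq> cube n \<longrightarrow> card B = card A \<longrightarrow> card (nbhd n t A) \<le> card (nbhd n t B))"

definition extremal :: "nat \<Rightarrow> nat set set \<Rightarrow> bool" where
  "extremal n A \<longleftrightarrow>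
     (\<forall>t>0. nbhd_minimal n t A \<and> nbhd_minimal n t (cube n - A))"

definition Bset :: "nat \<Rightarrow> nat \<Rightarrow> nat set set" where
  "Bset n r = {B \<in> cube n. card B \<le> r}
     \<union> {B \<in> cube n. (card B = r + 1 \<or> card B = r + 2) \<and> {1,2} \<subseteq> B}"

end

theory Submission
  imports Defs
begin

(* Harper's vertex-isoperimetric theorem: order the subsets of a finite set X by size and, among sets
   of equal size, let the one containing the least element of the symmetric difference come first.
   Initial segments S of this simplicial order have the smallest closed neighbourhoods,
   |N(S)| <= |N(A)| whenever |S| <= |A|, and N(S) is again an initial segment.  The proof is by
   induction on |X|: among the sets of a given size whose neighbourhood is no larger than that of A,
   one of least total rank is fixed by every i-compression (which replaces the two halves of a set
   along coordinate i by initial segments of the subcube), and a set that is compressed in every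
   direction is either an initial segment or arises from one by replacing its last element x with
   X - x; undoing this swap does not enlarge the neighbourhood.

   For X = [n] the Hamming ball of radius r together with the (r+1)-sets containing 1 is an initial
   segment T_r with |T_r| = |B_r| and N^t(T_r) = T_(r+t), while N^t(B_r) lies in B_(r+t); hence
   N^t(B_r) is minimal.  Complementation reverses the simplicial order and is an isometry, so
   Q_n - T_r is isometric to an initial segment.  Its t-neighbourhood contains Q_n - T_(r-t), whereas
   N^t(Q_n - B_r) lies in Q_n - B_(r-t), which gives minimality of N^t(Q_n - B_r). *)

section \<open>The simplicial order\<close>

definition lex_before :: "'a::linorder set \<Rightarrow> 'a set \<Rightarrow> bool" where
  "lex_before x y \<longleftrightarrow> (\<exists>a. a \<in> x \<and> a \<notin> y \<and> (\<forall>b<a. b \<in> x \<longleftrightarrow> b \<in> y))"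

definition simplicial_less :: "'a::linorder set \<Rightarrow> 'a set \<Rightarrow> bool" (infix "\<prec>" 50) where
  "x \<prec> y \<longleftrightarrow> card x < card y \<or> (card x = card y \<and> lex_before x y)"

lemma lex_before_irrefl: "\<not> lex_before x x"
  unfolding lex_before_def by blast

lemma lex_before_trans:
  assumes "lex_before x y" "lex_before y z"
  shows "lex_before x z"
proof -
  obtain a where a: "a \<in> x" "a \<notin> y" "\<forall>b<a. b \<in> x \<longleftrightarrow> b \<in> y"
    using assms(1) unfolding lex_before_def by blast
  obtain c where c: "c \<in> y" "c \<notin> z" "\<forall>b<c. b \<in> y \<longleftrightarrow> b \<in> z"
    using assms(2) unfolding lex_before_def by blast
  consider "a < c" | "a = c" | "c < a"
    using linorder_less_linear by blast
  then show ?thesis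
  proof cases
    case 1
    then show ?thesis unfolding lex_before_def using a c by (intro exI[of _ a]) auto
  next
    case 2
    then show ?thesis using a c by blast
  next
    case 3
    then show ?thesis unfolding lex_before_def using a c by (intro exI[of _ c]) auto
  qed
qed

lemma lex_before_total:
  assumes "finite x" "finite y" "x \<noteq> y"
  shows "lex_before x y \<or> lex_before y x"
proof -
  define a where "a = Min (sym_diff x y)"
  have fin: "finite (sym_diff x y)" and ne: "sym_diff x y \<noteq> {}"
    using assms by auto
  have a: "a \<in> sym_diff x y"
    unfolding a_def using fin ne by (rule Min_in)
  have below: "b \<in> x \<longleftrightarrow> b \<in> y" if "b < a" for b
    using Min_le[OF fin, of b] that unfolding a_def by (meson DiffI UnCI leD)
  show ?thesis
    using a below unfolding lex_before_def by (cases "a \<in> x") auto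
qed

lemma simplicial_less_irrefl: "\<not> x \<prec> x"
  unfolding simplicial_less_def using lex_before_irrefl by auto

lemma simplicial_less_trans: "x \<prec> y \<Longrightarrow> y \<prec> z \<Longrightarrow> x \<prec> z"
  unfolding simplicial_less_def using lex_before_trans by (elim disjE conjE) auto

lemma simplicial_less_asym: "x \<prec> y \<Longrightarrow> \<not> y \<prec> x"
  using simplicial_less_irrefl simplicial_less_trans by blast

lemma simplicial_less_total:
  "finite x \<Longrightarrow> finite y \<Longrightarrow> x \<noteq> y \<Longrightarrow> x \<prec> y \<or> y \<prec> x"
  unfolding simplicial_less_def using lex_before_total[of x y] by fastforce

lemma simplicial_less_if_card_less: "card x < card y \<Longrightarrow> x \<prec> y"
  unfolding simplicial_less_def by simp

lemma empty_simplicial_less: "finite x \<Longrightarrow> x \<noteq> {} \<Longrightarrow> {} \<prec> x"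
  by (simp add: simplicial_less_if_card_less card_gt_0_iff)

lemma not_simplicial_less_empty: "finite z \<Longrightarrow> \<not> z \<prec> {}"
  unfolding simplicial_less_def using lex_before_irrefl by auto

lemma simplicial_less_insert_iff:
  assumes "finite x" "finite y" "i \<notin> x" "i \<notin> y"
  shows "insert i x \<prec> insert i y \<longleftrightarrow> x \<prec> y"
proof -
  have "lex_before (insert i x) (insert i y) \<longleftrightarrow> lex_before x y"
  proof
    assume "lex_before (insert i x) (insert i y)"
    then obtain a where "a \<in> insert i x" "a \<notin> insert i y" "\<forall>b<a. b \<in> insert i x \<longleftrightarrow> b \<in> insert i y"
      unfolding lex_before_def by blast
    then show "lex_before x y"
      unfolding lex_before_def using assms(3,4) by (intro exI[of _ a]) auto
  next
    assume "lex_before x y"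
    then obtain a where "a \<in> x" "a \<notin> y" "\<forall>b<a. b \<in> x \<longleftrightarrow> b \<in> y"
      unfolding lex_before_def by blast
    then show "lex_before (insert i x) (insert i y)"
      unfolding lex_before_def using assms(3,4) by (intro exI[of _ a]) auto
  qed
  then show ?thesis
    unfolding simplicial_less_def using assms by simp
qed

lemma simplicial_less_Diff_iff:
  assumes "finite x" "finite y" "i \<in> x" "i \<in> y"
  shows "x - {i} \<prec> y - {i} \<longleftrightarrow> x \<prec> y"
  using simplicial_less_insert_iff[of "x - {i}" "y - {i}" i] assms by (simp add: insert_absorb)

lemma lex_before_compl_iff:
  assumes "x \<subseteq> X" "y \<subseteq> X"
  shows "lex_before (X - y) (X - x) \<longleftrightarrow> lex_before x y"
  unfolding lex_before_def
proof (rule ex_cong1)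
  fix a
  show "(a \<in> X - y \<and> a \<notin> X - x \<and> (\<forall>b<a. b \<in> X - y \<longleftrightarrow> b \<in> X - x)) \<longleftrightarrow>
    (a \<in> x \<and> a \<notin> y \<and> (\<forall>b<a. b \<in> x \<longleftrightarrow> b \<in> y))"
    using assms by blast
qed

lemma simplicial_less_compl_iff:
  assumes "finite X" "x \<subseteq> X" "y \<subseteq> X"
  shows "X - y \<prec> X - x \<longleftrightarrow> x \<prec> y"
proof -
  have "card x \<le> card X" "card y \<le> card X"
    using assms by (simp_all add: card_mono)
  moreover have "card (X - x) = card X - card x" "card (X - y) = card X - card y"
    using assms by (simp_all add: card_Diff_subset finite_subset)
  ultimately show ?thesis
    unfolding simplicial_less_def lex_before_compl_iff[OF assms(2,3)] by auto
qed

lemma simplicial_less_insert_shadow: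
  assumes fin: "finite u" "finite w" and j: "j \<notin> w"
    and less: "u \<prec> insert j w" and ne: "u \<noteq> {}"
  obtains k where "k \<in> u" "u - {k} = w \<or> u - {k} \<prec> w"
proof (cases "card u < card (insert j w)")
  case True
  obtain k where "k \<in> u" using ne by blast
  moreover have "card (u - {k}) < card w"
  proof -
    have "card (u - {k}) < card u"
      using fin(1) \<open>k \<in> u\<close> by (rule card_Diff1_less)
    also have "card u \<le> card w"
      using True fin j by simp
    finally show ?thesis .
  qed
  ultimately show ?thesis using that simplicial_less_if_card_less by blast
next
  case False
  then have card_u: "card u = Suc (card w)" and "lex_before u (insert j w)"
    using less fin j unfolding simplicial_less_def by auto
  then obtain a where a: "a \<in> u" "a \<notin> insert j w" "\<forall>b<a. b \<in> u \<longleftrightarrow> b \<in> insert j w"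
    unfolding lex_before_def by blast
  have card_Diff: "card (u - {k}) = card w" if "k \<in> u" for k
    using card_u that fin by simp
  have a_less: "a < j" if "j \<notin> u"
    using a that by (metis insertCI linorder_neqE)
  consider "j \<in> u" | e where "j \<notin> u" "e \<in> u" "a < e" | "j \<notin> u" "\<forall>e\<in>u. e \<le> a"
    using not_le by blast
  then show ?thesis
  proof cases
    case 1
    have "lex_before (u - {j}) w"
      unfolding lex_before_def using a j by (intro exI[of _ a]) auto
    then show ?thesis using that 1 card_Diff unfolding simplicial_less_def by blast
  next
    case 2
    have "lex_before (u - {e}) w"
      unfolding lex_before_def using a 2 a_less by (intro exI[of _ a]) auto
    then show ?thesis using that 2 card_Diff unfolding simplicial_less_def by blast
  next
    case 3
    have "u - {a} \<subseteq> w"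
      using a 3 a_less by (auto simp: order.order_iff_strict)
    then have "u - {a} = w"
      using card_Diff[OF a(1)] fin by (simp add: card_subset_eq)
    then show ?thesis using that a(1) by blast
  qed
qed

section \<open>Initial segments\<close>

definition rank :: "'a::linorder set \<Rightarrow> 'a set \<Rightarrow> nat" where
  "rank X x = card {u \<in> Pow X. u \<prec> x}"

definition initial_segment :: "'a::linorder set \<Rightarrow> 'a set set \<Rightarrow> bool" where
  "initial_segment X S \<longleftrightarrow> S \<subseteq> Pow X \<and> (\<forall>v\<in>S. \<forall>u\<in>Pow X. u \<prec> v \<longrightarrow> u \<in> S)"

definition first_subsets :: "'a::linorder set \<Rightarrow> nat \<Rightarrow> 'a set set" where
  "first_subsets X m = {u \<in> Pow X. rank X u < m}"

lemma rank_less: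
  assumes "finite X" "u \<subseteq> X" "u \<prec> v"
  shows "rank X u < rank X v"
proof -
  have "{w \<in> Pow X. w \<prec> u} \<subseteq> {w \<in> Pow X. w \<prec> v}"
    using assms(3) simplicial_less_trans by blast
  moreover have "u \<in> {w \<in> Pow X. w \<prec> v} - {w \<in> Pow X. w \<prec> u}"
    using assms(2,3) simplicial_less_irrefl by blast
  ultimately have "{w \<in> Pow X. w \<prec> u} \<subset> {w \<in> Pow X. w \<prec> v}"
    by blast
  then show ?thesis
    unfolding rank_def using assms(1) by (simp add: psubset_card_mono)
qed

lemma rank_lt_card_Pow:
  assumes "finite X" "x \<subseteq> X"
  shows "rank X x < 2 ^ card X"
proof -
  have "{u \<in> Pow X. u \<prec> x} \<subset> Pow X"
    using assms(2) simplicial_less_irrefl by blast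
  with assms(1) have "rank X x < card (Pow X)"
    unfolding rank_def by (simp add: psubset_card_mono)
  then show ?thesis
    using assms(1) by (simp add: card_Pow)
qed

lemma bij_betw_rank:
  assumes "finite X"
  shows "bij_betw (rank X) (Pow X) {..<2 ^ card X}"
proof -
  have inj: "inj_on (rank X) (Pow X)"
  proof (rule inj_onI)
    fix u v assume "u \<in> Pow X" "v \<in> Pow X" "rank X u = rank X v"
    then show "u = v"
      using assms simplicial_less_total[of u v] rank_less[of X u v] rank_less[of X v u]
      by (auto intro: finite_subset)
  qed
  moreover have "rank X ` Pow X \<subseteq> {..<2 ^ card X}"
    using rank_lt_card_Pow[OF assms] by blast
  moreover have "card (rank X ` Pow X) = card {..<2 ^ card X :: nat}"
    using inj assms by (simp add: card_image card_Pow)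
  ultimately show ?thesis
    unfolding bij_betw_def by (simp add: card_subset_eq)
qed

lemma first_subsets_subset_Pow: "first_subsets X m \<subseteq> Pow X"
  unfolding first_subsets_def by blast

lemma initial_segment_first_subsets: "finite X \<Longrightarrow> initial_segment X (first_subsets X m)"
  unfolding initial_segment_def first_subsets_def using rank_less by (auto intro: less_trans)

lemma card_first_subsets:
  assumes "finite X" "m \<le> 2 ^ card X"
  shows "card (first_subsets X m) = m"
proof -
  have bij: "bij_betw (rank X) (Pow X) {..<2 ^ card X}"
    using assms(1) by (rule bij_betw_rank)
  have "rank X ` first_subsets X m = {..<m}"
  proof
    show "{..<m} \<subseteq> rank X ` first_subsets X m"
    proof
      fix k assume "k \<in> {..<m}"
      then have "k \<in> rank X ` Pow X"
        using bij assms(2) unfolding bij_betw_def by auto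
      then show "k \<in> rank X ` first_subsets X m"
        using \<open>k \<in> {..<m}\<close> unfolding first_subsets_def by auto
    qed
  qed (auto simp: first_subsets_def)
  moreover have "inj_on (rank X) (first_subsets X m)"
    using bij first_subsets_subset_Pow unfolding bij_betw_def by (rule inj_on_subset[OF conjunct1])
  ultimately show ?thesis
    by (metis card_image card_lessThan)
qed

lemma mem_initial_segment_iff:
  assumes X: "finite X" and S: "initial_segment X S"
  shows "u \<in> S \<longleftrightarrow> u \<subseteq> X \<and> rank X u < card S"
proof -
  have SX: "S \<subseteq> Pow X" and down: "\<And>u v. v \<in> S \<Longrightarrow> u \<subseteq> X \<Longrightarrow> u \<prec> v \<Longrightarrow> u \<in> S"
    using S unfolding initial_segment_def by blast+
  have fin: "finite S"
    using X SX by (simp add: finite_subset)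
  have "rank X u < card S" if "u \<in> S"
  proof -
    have "{w \<in> Pow X. w \<prec> u} \<subseteq> S - {u}"
      using down that simplicial_less_irrefl by blast
    then have "rank X u \<le> card (S - {u})"
      unfolding rank_def using fin by (simp add: card_mono)
    also have "\<dots> < card S"
      using fin that by (rule card_Diff1_less)
    finally show ?thesis .
  qed
  moreover have "card S \<le> rank X u" if "u \<subseteq> X" "u \<notin> S"
  proof -
    have "S \<subseteq> {w \<in> Pow X. w \<prec> u}"
    proof
      fix v assume "v \<in> S"
      then have "v \<prec> u \<or> u \<prec> v"
        using that SX X simplicial_less_total[of u v] by (auto intro: finite_subset)
      then show "v \<in> {w \<in> Pow X. w \<prec> u}"
        using down \<open>v \<in> S\<close> that SX by blast
    qed
    then show ?thesis
      unfolding rank_def using X by (simp add: card_mono)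
  qed
  ultimately show ?thesis
    using SX by force
qed

lemma initial_segment_subset:
  assumes "finite X" "initial_segment X S" "initial_segment X T" "card S \<le> card T"
  shows "S \<subseteq> T"
  using assms by (auto simp: mem_initial_segment_iff)

lemma initial_segment_unique:
  "finite X \<Longrightarrow> initial_segment X S \<Longrightarrow> initial_segment X T \<Longrightarrow> card S = card T \<Longrightarrow> S = T"
  by (simp add: initial_segment_subset subset_antisym)

lemma card_Un_initial_segment:
  assumes "finite X" "initial_segment X S" "initial_segment X T"
  shows "card (S \<union> T) = max (card S) (card T)"
proof (cases "card S \<le> card T")
  case True
  then show ?thesis
    using initial_segment_subset[OF assms] by (simp add: sup.absorb2)
next
  case False
  then show ?thesis
    using initial_segment_subset[OF assms(1,3,2)] by (simp add: sup.absorb1)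
qed

lemma initial_segment_compl_image:
  assumes X: "finite X" and S: "initial_segment X S"
  shows "initial_segment X ((-) X ` (Pow X - S))"
  unfolding initial_segment_def
proof (intro conjI ballI impI)
  show "(-) X ` (Pow X - S) \<subseteq> Pow X"
    by blast
  fix v u assume v: "v \<in> (-) X ` (Pow X - S)" and u: "u \<in> Pow X" and uv: "u \<prec> v"
  then obtain w where w: "w \<subseteq> X" "w \<notin> S" "v = X - w"
    by blast
  have "w \<prec> X - u"
    using simplicial_less_compl_iff[OF X w(1), of "X - u"] uv w(3) u by (simp add: double_diff)
  then have "X - u \<notin> S"
    using S w(1,2) unfolding initial_segment_def by blast
  then show "u \<in> (-) X ` (Pow X - S)"
    using u by (auto simp: image_iff double_diff intro!: bexI[of _ "X - u"])
qed

lemma exists_simplicial_least: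
  assumes "finite X" "F \<subseteq> Pow X" "F \<noteq> {}"
  obtains m where "m \<in> F" "\<forall>u\<in>F. \<not> u \<prec> m"
proof -
  obtain m where m: "m \<in> F" "\<forall>u\<in>F. rank X m \<le> rank X u"
    using ex_has_least_nat[of "\<lambda>u. u \<in> F" _ "rank X"] assms(3) by blast
  have "\<not> u \<prec> m" if "u \<in> F" for u
    using rank_less[OF assms(1), of u m] m(2) that assms(2) by force
  then show ?thesis
    using that m(1) by blast
qed

section \<open>Closed neighbourhoods\<close>

definition flip :: "'a \<Rightarrow> 'a set \<Rightarrow> 'a set" where
  "flip j y = (if j \<in> y then y - {j} else insert j y)"

definition nbhd1 :: "'a set \<Rightarrow> 'a set set \<Rightarrow> 'a set set" where
  "nbhd1 X A = {x. x \<subseteq> X \<and> (\<exists>y\<in>A. x = y \<or> (\<exists>j\<in>X. x = flip j y))}"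

lemma flip_flip [simp]: "flip j (flip j y) = y"
  unfolding flip_def by auto

lemma flip_subset: "y \<subseteq> X \<Longrightarrow> j \<in> X \<Longrightarrow> flip j y \<subseteq> X"
  unfolding flip_def by auto

lemma flip_Diff: "j \<in> X \<Longrightarrow> flip j (X - w) = X - flip j w"
  unfolding flip_def by auto

lemma sym_diff_flip: "sym_diff (flip j x) y = flip j (sym_diff x y)"
  unfolding flip_def by auto

lemma card_flip: "finite x \<Longrightarrow> card (flip j x) = (if j \<in> x then card x - 1 else Suc (card x))"
  unfolding flip_def by simp

lemma nbhd1_subset_Pow: "nbhd1 X A \<subseteq> Pow X"
  unfolding nbhd1_def by blast

lemma finite_nbhd1: "finite X \<Longrightarrow> finite (nbhd1 X A)"
  by (meson finite_Pow_iff finite_subset nbhd1_subset_Pow)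

lemma nbhd1_mono: "A \<subseteq> B \<Longrightarrow> nbhd1 X A \<subseteq> nbhd1 X B"
  unfolding nbhd1_def by blast

lemma subset_nbhd1: "A \<subseteq> Pow X \<Longrightarrow> A \<subseteq> nbhd1 X A"
  unfolding nbhd1_def by blast

lemma flip_in_nbhd1:
  assumes "y \<in> A" "A \<subseteq> Pow X" "j \<in> X"
  shows "flip j y \<in> nbhd1 X A"
proof -
  have "flip j y \<subseteq> X"
    using assms by (intro flip_subset) auto
  then show ?thesis
    unfolding nbhd1_def using assms(1,3) by blast
qed

lemma nbhd1E:
  assumes "x \<in> nbhd1 X A"
  obtains "x \<in> A" | y j where "y \<in> A" "j \<in> X" "x = flip j y"
  using assms unfolding nbhd1_def by blast

lemma mem_nbhd1_iff: "x \<in> nbhd1 X A \<longleftrightarrow> x \<subseteq> X \<and> (x \<in> A \<or> (\<exists>j\<in>X. flip j x \<in> A))"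
proof -
  have "(\<exists>y\<in>A. x = y \<or> (\<exists>j\<in>X. x = flip j y)) \<longleftrightarrow> x \<in> A \<or> (\<exists>j\<in>X. flip j x \<in> A)"
    by (metis flip_flip)
  then show ?thesis
    unfolding nbhd1_def by blast
qed

lemma nbhd1_Un: "nbhd1 X (A \<union> B) = nbhd1 X A \<union> nbhd1 X B"
  unfolding nbhd1_def by blast

lemma nbhd1_compl_image:
  assumes A: "A \<subseteq> Pow X"
  shows "nbhd1 X ((-) X ` A) = (-) X ` nbhd1 X A"
proof
  have cA: "(-) X ` A \<subseteq> Pow X"
    by blast
  show "nbhd1 X ((-) X ` A) \<subseteq> (-) X ` nbhd1 X A"
  proof
    fix x assume "x \<in> nbhd1 X ((-) X ` A)"
    then show "x \<in> (-) X ` nbhd1 X A"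
    proof (cases rule: nbhd1E)
      case 1
      then show ?thesis using subset_nbhd1[OF A] by blast
    next
      case (2 y j)
      then obtain a where a: "a \<in> A" "y = X - a"
        by blast
      then have "x = X - flip j a"
        using 2 by (simp add: flip_Diff)
      then show ?thesis
        using flip_in_nbhd1[OF a(1) A \<open>j \<in> X\<close>] by blast
    qed
  qed
  show "(-) X ` nbhd1 X A \<subseteq> nbhd1 X ((-) X ` A)"
  proof
    fix x assume "x \<in> (-) X ` nbhd1 X A"
    then obtain w where w: "w \<in> nbhd1 X A" "x = X - w"
      by blast
    from w(1) show "x \<in> nbhd1 X ((-) X ` A)"
    proof (cases rule: nbhd1E)
      case 1
      then show ?thesis using w(2) subset_nbhd1[OF cA] by blast
    next
      case (2 a j)
      then have "x = flip j (X - a)"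
        using w(2) by (simp add: flip_Diff)
      moreover have "X - a \<in> (-) X ` A"
        using 2(1) by blast
      ultimately show ?thesis
        using flip_in_nbhd1[OF _ cA \<open>j \<in> X\<close>] by blast
    qed
  qed
qed

lemma card_compl_image: "A \<subseteq> Pow X \<Longrightarrow> card ((-) X ` A) = card A"
  by (intro card_image inj_onI) (auto simp: double_diff)

lemma card_nbhd1_compl_image: "A \<subseteq> Pow X \<Longrightarrow> card (nbhd1 X ((-) X ` A)) = card (nbhd1 X A)"
  by (simp add: nbhd1_compl_image card_compl_image nbhd1_subset_Pow)

lemma nbhd1_Diff_subset:
  assumes A: "A \<subseteq> Pow X" and AB: "nbhd1 X A \<subseteq> B"
  shows "nbhd1 X (Pow X - B) \<subseteq> Pow X - A"
proof
  fix x assume x: "x \<in> nbhd1 X (Pow X - B)"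
  have "x \<notin> A"
  proof
    assume "x \<in> A"
    from x show False
    proof (cases rule: nbhd1E)
      case 1
      then show False using \<open>x \<in> A\<close> subset_nbhd1[OF A] AB by blast
    next
      case (2 z j)
      then have "z = flip j x"
        by simp
      then show False using flip_in_nbhd1[OF \<open>x \<in> A\<close> A \<open>j \<in> X\<close>] AB 2(1) by blast
    qed
  qed
  then show "x \<in> Pow X - A"
    using x nbhd1_subset_Pow by blast
qed

lemma mem_nbhd1_if_less_insert:
  assumes X: "finite X" and S: "initial_segment X S" and w: "w \<in> S" "j \<notin> w"
    and u: "u \<subseteq> X" "u \<prec> insert j w"
  shows "u \<in> nbhd1 X S"
proof -
  have SX: "S \<subseteq> Pow X" and down: "\<And>u. u \<subseteq> X \<Longrightarrow> u = w \<or> u \<prec> w \<Longrightarrow> u \<in> S"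
    using S w(1) unfolding initial_segment_def by blast+
  have fin: "finite w" "finite u"
    using w(1) SX u(1) X by (auto intro: finite_subset)
  show ?thesis
  proof (cases "u = {}")
    case True
    then have "u \<in> S"
      using down u(1) empty_simplicial_less[OF fin(1)] by blast
    then show ?thesis
      using subset_nbhd1[OF SX] by blast
  next
    case False
    then obtain k where k: "k \<in> u" "u - {k} = w \<or> u - {k} \<prec> w"
      using simplicial_less_insert_shadow[OF fin(2,1) w(2) u(2)] by blast
    then have "flip k (u - {k}) \<in> nbhd1 X S"
      using down[of "u - {k}"] u(1) SX by (intro flip_in_nbhd1) auto
    moreover have "flip k (u - {k}) = u"
      using k(1) unfolding flip_def by auto
    ultimately show ?thesis
      by simp
  qed
qed

lemma nbhd1_initial_segment:
  assumes X: "finite X" and S: "initial_segment X S"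
  shows "initial_segment X (nbhd1 X S)"
  unfolding initial_segment_def
proof (intro conjI ballI impI)
  show "nbhd1 X S \<subseteq> Pow X"
    by (rule nbhd1_subset_Pow)
next
  have SX: "S \<subseteq> Pow X" and down: "\<And>u v. v \<in> S \<Longrightarrow> u \<subseteq> X \<Longrightarrow> u \<prec> v \<Longrightarrow> u \<in> S"
    using S unfolding initial_segment_def by blast+
  have SN: "S \<subseteq> nbhd1 X S"
    using SX by (rule subset_nbhd1)
  fix v u assume v: "v \<in> nbhd1 X S" and u: "u \<in> Pow X" and uv: "u \<prec> v"
  from v show "u \<in> nbhd1 X S"
  proof (cases rule: nbhd1E)
    case 1
    then show ?thesis using down u uv SN by blast
  next
    case (2 w j)
    show ?thesis
    proof (cases "j \<in> w")
      case True
      have "finite w"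
        using 2(1) SX X by (auto intro: finite_subset)
      then have "v \<prec> w"
        using 2(3) card_Diff1_less[OF _ True] unfolding flip_def
        by (simp add: True simplicial_less_if_card_less)
      with uv have "u \<prec> w"
        by (rule simplicial_less_trans)
      then show ?thesis
        using down[OF 2(1)] u SN by blast
    next
      case False
      then have "u \<prec> insert j w"
        using 2(3) uv unfolding flip_def by simp
      then show ?thesis
        using mem_nbhd1_if_less_insert[OF X S 2(1) False] u by blast
    qed
  qed
qed

section \<open>Splitting along a coordinate\<close>

definition lower :: "'a \<Rightarrow> 'a set set \<Rightarrow> 'a set set" where
  "lower i A = {x \<in> A. i \<notin> x}"

definition upper :: "'a \<Rightarrow> 'a set set \<Rightarrow> 'a set set" where
  "upper i A = (\<lambda>x. x - {i}) ` {x \<in> A. i \<in> x}"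

definition glue :: "'a \<Rightarrow> 'a set set \<Rightarrow> 'a set set \<Rightarrow> 'a set set" where
  "glue i P Q = P \<union> insert i ` Q"

lemma mem_upper_iff: "x \<in> upper i A \<longleftrightarrow> i \<notin> x \<and> insert i x \<in> A"
  unfolding upper_def by (auto simp: image_iff insert_absorb)

lemma lower_subset_Pow: "A \<subseteq> Pow X \<Longrightarrow> lower i A \<subseteq> Pow (X - {i})"
  unfolding lower_def by auto

lemma upper_subset_Pow: "A \<subseteq> Pow X \<Longrightarrow> upper i A \<subseteq> Pow (X - {i})"
  unfolding upper_def by auto

lemma glue_subset_Pow:
  "i \<in> X \<Longrightarrow> P \<subseteq> Pow (X - {i}) \<Longrightarrow> Q \<subseteq> Pow (X - {i}) \<Longrightarrow> glue i P Q \<subseteq> Pow X"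
  unfolding glue_def by auto

lemma lower_glue: "P \<subseteq> Pow (X - {i}) \<Longrightarrow> lower i (glue i P Q) = P"
  unfolding lower_def glue_def by auto

lemma upper_glue: "P \<subseteq> Pow (X - {i}) \<Longrightarrow> Q \<subseteq> Pow (X - {i}) \<Longrightarrow> upper i (glue i P Q) = Q"
  unfolding glue_def by (auto simp: mem_upper_iff; metis Diff_iff PowD insert_ident insertI1 subsetD)

lemma glue_lower_upper: "glue i (lower i A) (upper i A) = A"
proof -
  have "x \<in> insert i ` upper i A" if "x \<in> A" "i \<in> x" for x
  proof
    show "x = insert i (x - {i})"
      using that(2) by blast
    show "x - {i} \<in> upper i A"
      using that by (simp add: mem_upper_iff insert_absorb)
  qed
  then show ?thesis
    unfolding glue_def lower_def by (auto simp: mem_upper_iff)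
qed

lemma sum_lower_upper:
  assumes "finite A"
  shows "sum f A = sum f (lower i A) + (\<Sum>x\<in>upper i A. f (insert i x))"
proof -
  have split: "A = lower i A \<union> insert i ` upper i A"
    using glue_lower_upper[of i A] unfolding glue_def by simp
  have disjoint: "lower i A \<inter> insert i ` upper i A = {}"
    unfolding lower_def by blast
  have "inj_on (insert i) (upper i A)"
    by (rule inj_onI) (metis insert_ident mem_upper_iff)
  then have "sum f (insert i ` upper i A) = (\<Sum>x\<in>upper i A. f (insert i x))"
    by (simp add: sum.reindex)
  moreover have "finite (lower i A)" "finite (insert i ` upper i A)"
    using assms split by (metis finite_Un)+
  ultimately show ?thesis
    using split disjoint by (metis sum.union_disjoint)
qed

lemma card_lower_upper: "finite A \<Longrightarrow> card A = card (lower i A) + card (upper i A)"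
  using sum_lower_upper[of A "\<lambda>_. 1 :: nat" i] by (simp only: card_eq_sum)

lemma flip_insert_other: "j \<noteq> i \<Longrightarrow> flip j (insert i x) = insert i (flip j x)"
  unfolding flip_def by auto

lemma flip_notin: "i \<notin> x \<Longrightarrow> flip i x = insert i x"
  unfolding flip_def by auto

lemma mem_flip_other: "j \<noteq> i \<Longrightarrow> i \<in> flip j x \<longleftrightarrow> i \<in> x"
  unfolding flip_def by auto

lemma lower_nbhd1:
  assumes A: "A \<subseteq> Pow X" and i: "i \<in> X"
  shows "lower i (nbhd1 X A) = nbhd1 (X - {i}) (lower i A) \<union> upper i A"
proof (rule set_eqI)
  fix x
  show "x \<in> lower i (nbhd1 X A) \<longleftrightarrow> x \<in> nbhd1 (X - {i}) (lower i A) \<union> upper i A"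
  proof (cases "x \<subseteq> X - {i}")
    case False
    then show ?thesis
      using nbhd1_subset_Pow upper_subset_Pow[OF A] unfolding lower_def by blast
  next
    case True
    then have ix: "i \<notin> x"
      by blast
    have "flip j x \<in> lower i A \<longleftrightarrow> flip j x \<in> A" if "j \<in> X - {i}" for j
      using that ix by (simp add: lower_def mem_flip_other)
    then have "(\<exists>j\<in>X - {i}. flip j x \<in> lower i A) \<longleftrightarrow> (\<exists>j\<in>X - {i}. flip j x \<in> A)"
      by blast
    moreover have "x \<in> lower i (nbhd1 X A) \<longleftrightarrow> x \<in> A \<or> flip i x \<in> A \<or> (\<exists>j\<in>X - {i}. flip j x \<in> A)"
      using True i ix unfolding lower_def mem_nbhd1_iff by blast
    moreover have "x \<in> lower i A \<longleftrightarrow> x \<in> A" "x \<in> upper i A \<longleftrightarrow> flip i x \<in> A"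
      using ix by (simp_all add: lower_def mem_upper_iff flip_notin)
    moreover have "x \<in> nbhd1 (X - {i}) (lower i A) \<longleftrightarrow>
        x \<in> lower i A \<or> (\<exists>j\<in>X - {i}. flip j x \<in> lower i A)"
      using True by (simp add: mem_nbhd1_iff)
    ultimately show ?thesis
      by blast
  qed
qed

lemma upper_nbhd1:
  assumes A: "A \<subseteq> Pow X" and i: "i \<in> X"
  shows "upper i (nbhd1 X A) = nbhd1 (X - {i}) (upper i A) \<union> lower i A"
proof (rule set_eqI)
  fix x
  show "x \<in> upper i (nbhd1 X A) \<longleftrightarrow> x \<in> nbhd1 (X - {i}) (upper i A) \<union> lower i A"
  proof (cases "x \<subseteq> X - {i}")
    case False
    then show ?thesis
      using nbhd1_subset_Pow A unfolding lower_def mem_upper_iff by blast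
  next
    case True
    then have ix: "i \<notin> x"
      by blast
    have "flip j (insert i x) \<in> A \<longleftrightarrow> flip j x \<in> upper i A" if "j \<in> X - {i}" for j
      using that ix by (simp add: mem_upper_iff flip_insert_other mem_flip_other)
    then have "(\<exists>j\<in>X - {i}. flip j (insert i x) \<in> A) \<longleftrightarrow> (\<exists>j\<in>X - {i}. flip j x \<in> upper i A)"
      by blast
    moreover have "flip i (insert i x) = x"
      using ix by (metis flip_flip flip_notin)
    moreover have "x \<in> upper i (nbhd1 X A) \<longleftrightarrow>
        insert i x \<in> A \<or> flip i (insert i x) \<in> A \<or> (\<exists>j\<in>X - {i}. flip j (insert i x) \<in> A)"
      using True i ix unfolding mem_upper_iff mem_nbhd1_iff by blast
    moreover have "x \<in> lower i A \<longleftrightarrow> x \<in> A" "x \<in> upper i A \<longleftrightarrow> insert i x \<in> A"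
      using ix by (simp_all add: lower_def mem_upper_iff)
    moreover have "x \<in> nbhd1 (X - {i}) (upper i A) \<longleftrightarrow>
        x \<in> upper i A \<or> (\<exists>j\<in>X - {i}. flip j x \<in> upper i A)"
      using True by (simp add: mem_nbhd1_iff)
    ultimately show ?thesis
      by auto
  qed
qed

lemma card_nbhd1_lower_upper:
  assumes "finite X" "A \<subseteq> Pow X" "i \<in> X"
  shows "card (nbhd1 X A) =
    card (nbhd1 (X - {i}) (lower i A) \<union> upper i A) + card (nbhd1 (X - {i}) (upper i A) \<union> lower i A)"
  using card_lower_upper[OF finite_nbhd1[OF assms(1)], where i = i] lower_nbhd1[OF assms(2,3)] upper_nbhd1[OF assms(2,3)]
  by simp

section \<open>Compression\<close>

lemma sum_less_if_all_less:
  fixes f :: "'a \<Rightarrow> nat"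
  assumes "finite D" "finite E" "D \<noteq> {}" "card D = card E" and less: "\<forall>a\<in>D. \<forall>b\<in>E. f a < f b"
  shows "sum f D < sum f E"
proof -
  define M where "M = Max (f ` D)"
  have "\<forall>a\<in>D. f a \<le> M" "\<forall>b\<in>E. M < f b"
    unfolding M_def using assms(1,3) less by (auto intro: Max_in)
  then have "sum f D \<le> card D * M"
    using sum_bounded_above[of D f M] by simp
  also have "\<dots> < card D * Suc M"
    using assms(1,3) by (simp add: card_gt_0_iff)
  also have "\<dots> = card E * Suc M"
    using assms(4) by simp
  also have "\<dots> \<le> sum f E"
    using sum_bounded_below[of E "Suc M" f] \<open>\<forall>b\<in>E. M < f b\<close> by (simp add: Suc_le_eq)
  finally show ?thesis .
qed

lemma sum_initial_segment_less:
  fixes f :: "'a::linorder set \<Rightarrow> nat"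
  assumes X: "finite X" and f: "\<And>u v. u \<subseteq> X \<Longrightarrow> v \<subseteq> X \<Longrightarrow> u \<prec> v \<Longrightarrow> f u < f v"
    and S: "S \<subseteq> Pow X" and T: "initial_segment X T" and card: "card S = card T" and "S \<noteq> T"
  shows "sum f T < sum f S"
proof -
  have TX: "T \<subseteq> Pow X" and down: "\<And>u v. v \<in> T \<Longrightarrow> u \<subseteq> X \<Longrightarrow> u \<prec> v \<Longrightarrow> u \<in> T"
    using T unfolding initial_segment_def by blast+
  have fin: "finite S" "finite T"
    using X S TX by (auto intro: finite_subset)
  have "card S = card (S \<inter> T) + card (S - T)" "card T = card (S \<inter> T) + card (T - S)"
    using card_Int_Diff[OF fin(1), of T] card_Int_Diff[OF fin(2), of S] by (simp_all add: Int_commute)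
  then have card_Diff: "card (T - S) = card (S - T)"
    using card by simp
  have "T - S \<noteq> {}"
  proof
    assume "T - S = {}"
    then have "card (S - T) = 0"
      using card_Diff by (metis card.empty)
    then have "S - T = {}"
      using fin by simp
    then show False
      using \<open>T - S = {}\<close> \<open>S \<noteq> T\<close> by blast
  qed
  moreover have "\<forall>a\<in>T - S. \<forall>b\<in>S - T. f a < f b"
  proof (intro ballI)
    fix a b assume a: "a \<in> T - S" and b: "b \<in> S - T"
    have aX: "a \<subseteq> X" and bX: "b \<subseteq> X"
      using a b S TX by blast+
    have "a \<prec> b \<or> b \<prec> a"
      using a b X aX bX by (intro simplicial_less_total) (auto intro: finite_subset)
    moreover have "\<not> b \<prec> a"
      using a b bX down by blast
    ultimately show "f a < f b"
      using f aX bX by blast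
  qed
  ultimately have "sum f (T - S) < sum f (S - T)"
    using fin card_Diff by (intro sum_less_if_all_less) auto
  moreover have "sum f S = sum f (S \<inter> T) + sum f (S - T)" "sum f T = sum f (S \<inter> T) + sum f (T - S)"
    using sum.Int_Diff[OF fin(1), of f T] sum.Int_Diff[OF fin(2), of f S] by (simp_all add: Int_commute)
  ultimately show ?thesis
    by simp
qed

lemma card_nbhd1_Un_initial_segment_le:
  assumes Y: "finite Y" and S: "initial_segment Y S" and T: "initial_segment Y T"
    and less_S: "card (nbhd1 Y S) \<le> card (nbhd1 Y P)" and card_T: "card T = card Q" and "finite Q"
  shows "card (nbhd1 Y S \<union> T) \<le> card (nbhd1 Y P \<union> Q)"
proof -
  have "card (nbhd1 Y S \<union> T) = max (card (nbhd1 Y S)) (card T)"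
    using Y nbhd1_initial_segment[OF Y S] T by (rule card_Un_initial_segment)
  also have "\<dots> \<le> max (card (nbhd1 Y P)) (card Q)"
    using less_S card_T by simp
  also have "\<dots> \<le> card (nbhd1 Y P \<union> Q)"
    using finite_nbhd1[OF Y] \<open>finite Q\<close> by (simp add: card_mono)
  finally show ?thesis .
qed

definition compress :: "'a::linorder set \<Rightarrow> 'a \<Rightarrow> 'a set set \<Rightarrow> 'a set set" where
  "compress X i A =
    glue i (first_subsets (X - {i}) (card (lower i A))) (first_subsets (X - {i}) (card (upper i A)))"

lemma lower_compress: "lower i (compress X i A) = first_subsets (X - {i}) (card (lower i A))"
  unfolding compress_def by (rule lower_glue[OF first_subsets_subset_Pow])

lemma upper_compress: "upper i (compress X i A) = first_subsets (X - {i}) (card (upper i A))"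
  unfolding compress_def by (rule upper_glue[OF first_subsets_subset_Pow first_subsets_subset_Pow])

lemma compress_subset_Pow: "i \<in> X \<Longrightarrow> compress X i A \<subseteq> Pow X"
  unfolding compress_def by (intro glue_subset_Pow first_subsets_subset_Pow)

lemma card_lower_upper_le:
  assumes "finite X" "A \<subseteq> Pow X"
  shows "card (lower i A) \<le> 2 ^ card (X - {i})" "card (upper i A) \<le> 2 ^ card (X - {i})"
  using card_mono[OF _ lower_subset_Pow[OF assms(2)]] card_mono[OF _ upper_subset_Pow[OF assms(2)]] assms(1)
  by (simp_all add: card_Pow)

lemma card_compress:
  assumes X: "finite X" and i: "i \<in> X" and A: "A \<subseteq> Pow X"
  shows "card (compress X i A) = card A"
proof -
  have "finite (compress X i A)" "finite A"
    using compress_subset_Pow[OF i] A X by (auto intro: finite_subset)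
  moreover have "card (first_subsets (X - {i}) (card (lower i A))) = card (lower i A)"
    "card (first_subsets (X - {i}) (card (upper i A))) = card (upper i A)"
    using card_first_subsets[of "X - {i}"] card_lower_upper_le[OF X A] X by simp_all
  ultimately show ?thesis
    using card_lower_upper[of "compress X i A" i] card_lower_upper[of A i]
    unfolding lower_compress upper_compress by simp
qed

lemma card_nbhd1_compress_le:
  assumes X: "finite X" and i: "i \<in> X" and A: "A \<subseteq> Pow X"
    and harper: "\<And>B S. B \<subseteq> Pow (X - {i}) \<Longrightarrow> initial_segment (X - {i}) S \<Longrightarrow> card S = card B \<Longrightarrow>
      card (nbhd1 (X - {i}) S) \<le> card (nbhd1 (X - {i}) B)"
  shows "card (nbhd1 X (compress X i A)) \<le> card (nbhd1 X A)"
proof -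
  define Y where "Y = X - {i}"
  define P Q where "P = lower i A" and "Q = upper i A"
  define P' Q' where "P' = first_subsets Y (card P)" and "Q' = first_subsets Y (card Q)"
  have Y: "finite Y" and PY: "P \<subseteq> Pow Y" and QY: "Q \<subseteq> Pow Y"
    unfolding Y_def P_def Q_def using X lower_subset_Pow[OF A] upper_subset_Pow[OF A] by auto
  have fin: "finite P" "finite Q"
    using Y PY QY by (auto intro: finite_subset)
  have P': "initial_segment Y P'" "card P' = card P" and Q': "initial_segment Y Q'" "card Q' = card Q"
    unfolding P'_def Q'_def using initial_segment_first_subsets[OF Y] card_first_subsets[OF Y]
      card_lower_upper_le[OF X A] unfolding P_def Q_def Y_def by simp_all
  have "card (nbhd1 Y P' \<union> Q') \<le> card (nbhd1 Y P \<union> Q)"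
    using Y P'(1) Q'(1) harper[OF PY[unfolded Y_def] P'(1)[unfolded Y_def] P'(2)] Q'(2) fin(2)
    unfolding Y_def by (rule card_nbhd1_Un_initial_segment_le)
  moreover have "card (nbhd1 Y Q' \<union> P') \<le> card (nbhd1 Y Q \<union> P)"
    using Y Q'(1) P'(1) harper[OF QY[unfolded Y_def] Q'(1)[unfolded Y_def] Q'(2)] P'(2) fin(1)
    unfolding Y_def by (rule card_nbhd1_Un_initial_segment_le)
  ultimately show ?thesis
    using card_nbhd1_lower_upper[OF X compress_subset_Pow[OF i] i] card_nbhd1_lower_upper[OF X A i]
    unfolding lower_compress upper_compress P'_def Q'_def P_def Q_def Y_def by simp
qed

lemma sum_rank_compress_less:
  assumes X: "finite X" and i: "i \<in> X" and A: "A \<subseteq> Pow X" and changed: "compress X i A \<noteq> A"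
  shows "sum (rank X) (compress X i A) < sum (rank X) A"
proof -
  define Y where "Y = X - {i}"
  define P Q where "P = lower i A" and "Q = upper i A"
  define P' Q' where "P' = first_subsets Y (card P)" and "Q' = first_subsets Y (card Q)"
  let ?g = "\<lambda>x. rank X (insert i x)"
  have Y: "finite Y" and PY: "P \<subseteq> Pow Y" and QY: "Q \<subseteq> Pow Y"
    unfolding Y_def P_def Q_def using X lower_subset_Pow[OF A] upper_subset_Pow[OF A] by auto
  have P': "initial_segment Y P'" "card P = card P'" and Q': "initial_segment Y Q'" "card Q = card Q'"
    unfolding P'_def Q'_def using initial_segment_first_subsets[OF Y] card_first_subsets[OF Y]
      card_lower_upper_le[OF X A] unfolding P_def Q_def Y_def by simp_all
  have mono_rank: "rank X u < rank X v" if "u \<subseteq> Y" "v \<subseteq> Y" "u \<prec> v" for u v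
    using rank_less[OF X] that unfolding Y_def by blast
  have mono_g: "?g u < ?g v" if "u \<subseteq> Y" "v \<subseteq> Y" "u \<prec> v" for u v
  proof (rule rank_less[OF X])
    show "insert i u \<subseteq> X"
      using that(1) i unfolding Y_def by blast
    have "finite u" "finite v" "i \<notin> u" "i \<notin> v"
      using that(1,2) Y finite_subset unfolding Y_def by blast+
    then show "insert i u \<prec> insert i v"
      using that(3) by (simp add: simplicial_less_insert_iff)
  qed
  have less_P: "sum (rank X) P' < sum (rank X) P" if "P \<noteq> P'"
    using sum_initial_segment_less[OF Y mono_rank PY P'] that by simp
  have less_Q: "sum ?g Q' < sum ?g Q" if "Q \<noteq> Q'"
    using sum_initial_segment_less[OF Y mono_g QY Q'] that by simp
  have "P \<noteq> P' \<or> Q \<noteq> Q'"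
    using changed glue_lower_upper[of i A] unfolding compress_def P'_def Q'_def P_def Q_def Y_def by auto
  moreover have "sum (rank X) P' \<le> sum (rank X) P" "sum ?g Q' \<le> sum ?g Q"
    using less_P less_Q by force+
  ultimately have "sum (rank X) P' + sum ?g Q' < sum (rank X) P + sum ?g Q"
    using less_P less_Q by (auto intro: add_less_le_mono add_le_less_mono)
  moreover have "finite (compress X i A)" "finite A"
    using compress_subset_Pow[OF i] A X by (auto intro: finite_subset)
  ultimately show ?thesis
    using sum_lower_upper[of "compress X i A" "rank X" i] sum_lower_upper[of A "rank X" i]
    unfolding lower_compress upper_compress P'_def Q'_def P_def Q_def Y_def by simp
qed

section \<open>Harper's vertex-isoperimetric theorem\<close>

definition compressed :: "'a::linorder set \<Rightarrow> 'a set set \<Rightarrow> bool" where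
  "compressed X A \<longleftrightarrow>
    (\<forall>i\<in>X. initial_segment (X - {i}) (lower i A) \<and> initial_segment (X - {i}) (upper i A))"

lemma compressed_gap:
  assumes X: "finite X" and A: "A \<subseteq> Pow X" and C: "compressed X A"
    and u: "u \<subseteq> X" "u \<notin> A" and v: "v \<in> A" and uv: "u \<prec> v"
  shows "v = X - u"
proof -
  have vX: "v \<subseteq> X"
    using v A by blast
  have fin: "finite u" "finite v"
    using u(1) vX X by (auto intro: finite_subset)
  have "i \<in> v \<longleftrightarrow> i \<notin> u" if i: "i \<in> X" for i
  proof -
    have low: "initial_segment (X - {i}) (lower i A)" and up: "initial_segment (X - {i}) (upper i A)"
      using C i unfolding compressed_def by blast+
    have "\<not> (i \<in> u \<and> i \<in> v)"
    proof
      assume iuv: "i \<in> u \<and> i \<in> v"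
      then have "u - {i} \<prec> v - {i}"
        using simplicial_less_Diff_iff[OF fin] uv by blast
      moreover have "v - {i} \<in> upper i A"
        using v iuv by (simp add: mem_upper_iff insert_absorb)
      ultimately have "u - {i} \<in> upper i A"
        using up u(1) unfolding initial_segment_def by blast
      then show False
        using u(2) iuv by (simp add: mem_upper_iff insert_absorb)
    qed
    moreover have "\<not> (i \<notin> u \<and> i \<notin> v)"
    proof
      assume "i \<notin> u \<and> i \<notin> v"
      then have "v \<in> lower i A" "u \<subseteq> X - {i}"
        using v u(1) unfolding lower_def by blast+
      then have "u \<in> lower i A"
        using low uv unfolding initial_segment_def by blast
      then show False
        using u(2) unfolding lower_def by blast
    qed
    ultimately show ?thesis
      by blast
  qed
  then show ?thesis
    using vX by blast
qed

lemma compressed_subset_insert_compl: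
  assumes X: "finite X" and A: "A \<subseteq> Pow X" and C: "compressed X A" and x: "x \<subseteq> X" "x \<notin> A"
  shows "A \<subseteq> insert (X - x) {z \<in> Pow X. z \<prec> x}"
proof
  fix w assume w: "w \<in> A"
  then have "w \<prec> x \<or> x \<prec> w"
    using simplicial_less_total[of w x] x A X by (auto intro: finite_subset)
  then show "w \<in> insert (X - x) {z \<in> Pow X. z \<prec> x}"
    using compressed_gap[OF X A C x] w A by blast
qed

lemma compressed_not_initial_segment:
  assumes X: "finite X" and A: "A \<subseteq> Pow X" and C: "compressed X A" and "\<not> initial_segment X A"
  obtains x where "x \<subseteq> X" "x \<prec> X - x" "A = insert (X - x) {z \<in> Pow X. z \<prec> x}"
    "\<And>z. z \<subseteq> X \<Longrightarrow> z \<prec> X - x \<Longrightarrow> z \<prec> x \<or> z = x"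
proof -
  have gap: "\<And>u v. u \<subseteq> X \<Longrightarrow> u \<notin> A \<Longrightarrow> v \<in> A \<Longrightarrow> u \<prec> v \<Longrightarrow> v = X - u"
    using compressed_gap[OF X A C] by blast
  have "\<exists>v\<in>A. \<exists>u\<in>Pow X. u \<prec> v \<and> u \<notin> A"
    using assms(4) A unfolding initial_segment_def by blast
  then obtain v u where v: "v \<in> A" and u: "u \<in> Pow X" "u \<notin> A" "u \<prec> v"
    by blast
  have "Pow X - A \<noteq> {}"
    using u by blast
  then obtain x where x0: "x \<in> Pow X - A" and least: "\<forall>z\<in>Pow X - A. \<not> z \<prec> x"
    by (rule exists_simplicial_least[OF X Diff_subset])
  then have x: "x \<subseteq> X" "x \<notin> A"
    by auto
  have "u = x \<or> x \<prec> u"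
    using simplicial_less_total[of u x] u(1,2) x least X by (auto intro: finite_subset)
  then have "x \<prec> v"
    using u(3) simplicial_less_trans by blast
  then have "v = X - x"
    using gap x v by blast
  moreover have "{z \<in> Pow X. z \<prec> x} \<subseteq> A"
    using least by blast
  ultimately have "insert (X - x) {z \<in> Pow X. z \<prec> x} \<subseteq> A"
    using v by blast
  with compressed_subset_insert_compl[OF X A C x]
  have A_eq: "A = insert (X - x) {z \<in> Pow X. z \<prec> x}"
    by (rule equalityI)
  show ?thesis
  proof
    show "x \<subseteq> X" "x \<prec> X - x"
      using x \<open>x \<prec> v\<close> \<open>v = X - x\<close> by auto
    show "A = insert (X - x) {z \<in> Pow X. z \<prec> x}"
      by (rule A_eq)
    fix z assume z: "z \<subseteq> X" "z \<prec> X - x"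
    show "z \<prec> x \<or> z = x"
    proof (cases "z \<in> A")
      case True
      then have "z \<in> insert (X - x) {z \<in> Pow X. z \<prec> x}"
        unfolding A_eq .
      then show ?thesis
        using z(2) simplicial_less_irrefl by blast
    next
      case False
      then have "X - x = X - z"
        using gap z v \<open>v = X - x\<close> by blast
      then show ?thesis
        using z(1) x by blast
    qed
  qed
qed

lemma exists_swap_simplicial_less_compl:
  assumes X: "finite X" and x: "x \<subseteq> X" "x \<noteq> {}" and less: "x \<prec> X - x" and j: "j \<in> X - x"
    and not_singletons: "\<not> (card x = 1 \<and> card (X - x) = 1)"
  obtains k where "k \<in> x" "insert j (x - {k}) \<prec> X - x"
proof -
  have fx: "finite x"
    using x(1) X by (rule finite_subset)
  have card_swap: "card (insert j (x - {k})) = card x" if "k \<in> x" for k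
  proof -
    have "card x > 0"
      using fx that card_gt_0_iff by blast
    then show ?thesis
      using fx that j by simp
  qed
  show ?thesis
  proof (cases "card x < card (X - x)")
    case True
    obtain k where k: "k \<in> x"
      using x(2) by blast
    have "insert j (x - {k}) \<prec> X - x"
      using card_swap[OF k] True by (simp add: simplicial_less_if_card_less)
    then show ?thesis
      using that k by blast
  next
    case False
    then have card_eq: "card x = card (X - x)" and "lex_before x (X - x)"
      using less unfolding simplicial_less_def by auto
    then obtain a where a: "a \<in> x" "\<forall>b<a. b \<in> x \<longleftrightarrow> b \<in> X - x"
      unfolding lex_before_def by blast
    have "\<not> x \<subseteq> {a}"
    proof
      assume "x \<subseteq> {a}"
      then have "x = {a}"
        using a(1) by blast
      then show False
        using card_eq not_singletons by simp
    qed
    then obtain k where k: "k \<in> x" "k \<noteq> a"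
      by blast
    have "b \<notin> X" if "b < a" for b
      using a(2) that x(1) by blast
    then have "lex_before (insert j (x - {k})) (X - x)"
      unfolding lex_before_def using a(1) k j x(1) by (intro exI[of _ a]) blast
    then have "insert j (x - {k}) \<prec> X - x"
      using card_swap[OF k(1)] card_eq unfolding simplicial_less_def by simp
    then show ?thesis
      using that k(1) by blast
  qed
qed

lemma insert_in_nbhd1_if_predecessor_of_compl:
  assumes X: "finite X" and x: "x \<subseteq> X" "x \<noteq> {}" and less: "x \<prec> X - x"
    and between: "\<And>z. z \<subseteq> X \<Longrightarrow> z \<prec> X - x \<Longrightarrow> z \<prec> x \<or> z = x"
    and j: "j \<in> X - x"
  shows "insert j x \<in> nbhd1 X (insert (X - x) {z \<in> Pow X. z \<prec> x})"
    (is "_ \<in> nbhd1 X ?A")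
proof (cases "card x = 1 \<and> card (X - x) = 1")
  case True
  then obtain a where "x = {a}" "X - x = {j}"
    using j by (metis card_1_singletonE singletonD)
  then have "insert j x = flip a (X - x)"
    unfolding flip_def by auto
  then show ?thesis
    using flip_in_nbhd1[of "X - x" ?A X a] \<open>x = {a}\<close> x(1) by auto
next
  case False
  then obtain k where k: "k \<in> x" "insert j (x - {k}) \<prec> X - x"
    using exists_swap_simplicial_less_compl[OF X x less j] by blast
  have "insert j (x - {k}) \<noteq> x"
    using j by blast
  then have "insert j (x - {k}) \<in> ?A"
    using between[OF _ k(2)] j x(1) by blast
  then have "flip k (insert j (x - {k})) \<in> nbhd1 X ?A"
    using k(1) x(1) by (intro flip_in_nbhd1) auto
  moreover have "flip k (insert j (x - {k})) = insert j x"
    using j k(1) unfolding flip_def by auto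
  ultimately show ?thesis
    by simp
qed

lemma nbhd1_subset_if_predecessor_of_compl:
  assumes X: "finite X" and x: "x \<subseteq> X" "x \<noteq> {}" and less: "x \<prec> X - x"
    and between: "\<And>z. z \<subseteq> X \<Longrightarrow> z \<prec> X - x \<Longrightarrow> z \<prec> x \<or> z = x"
  shows "nbhd1 X {x} \<subseteq> nbhd1 X (insert (X - x) {z \<in> Pow X. z \<prec> x})"
    (is "_ \<subseteq> nbhd1 X ?A")
proof -
  have AX: "?A \<subseteq> Pow X"
    by blast
  have fx: "finite x"
    using x(1) X by (rule finite_subset)
  have minus_in: "x - {k} \<in> ?A" if "k \<in> x" for k
    using card_Diff1_less[OF fx that] x(1) by (auto intro: simplicial_less_if_card_less)
  obtain k where k: "k \<in> x"
    using x(2) by blast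
  then have "flip k (x - {k}) \<in> nbhd1 X ?A"
    using flip_in_nbhd1[OF minus_in[OF k] AX] x(1) by blast
  moreover have "flip k (x - {k}) = x"
    using k unfolding flip_def by auto
  ultimately have "x \<in> nbhd1 X ?A"
    by simp
  moreover have "flip j x \<in> nbhd1 X ?A" if j: "j \<in> X" for j
  proof (cases "j \<in> x")
    case True
    then have "flip j x \<in> ?A"
      using minus_in[OF True] unfolding flip_def by simp
    then show ?thesis
      using subset_nbhd1[OF AX] by blast
  next
    case False
    then have "flip j x = insert j x"
      unfolding flip_def by simp
    then show ?thesis
      using insert_in_nbhd1_if_predecessor_of_compl[OF X x less between] j False by simp
  qed
  ultimately show ?thesis
    by (auto elim: nbhd1E)
qed

lemma initial_segment_insert_predecessors:
  assumes "x \<subseteq> X"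
  shows "initial_segment X (insert x {z \<in> Pow X. z \<prec> x})"
  unfolding initial_segment_def
proof (intro conjI ballI impI)
  show "insert x {z \<in> Pow X. z \<prec> x} \<subseteq> Pow X"
    using assms by blast
  fix v u assume "v \<in> insert x {z \<in> Pow X. z \<prec> x}" "u \<in> Pow X" "u \<prec> v"
  then show "u \<in> insert x {z \<in> Pow X. z \<prec> x}"
    using simplicial_less_trans by blast
qed

lemma compressed_exists_initial_segment:
  assumes X: "finite X" and A: "A \<subseteq> Pow X" and C: "compressed X A"
  obtains S where "initial_segment X S" "card S = card A" "card (nbhd1 X S) \<le> card (nbhd1 X A)"
proof (cases "initial_segment X A")
  case True
  then show ?thesis
    using that by blast
next
  case False
  then obtain x where x: "x \<subseteq> X" "x \<prec> X - x" and A_eq: "A = insert (X - x) {z \<in> Pow X. z \<prec> x}"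
    and between: "\<And>z. z \<subseteq> X \<Longrightarrow> z \<prec> X - x \<Longrightarrow> z \<prec> x \<or> z = x"
    using compressed_not_initial_segment[OF X A C] by blast
  define P where "P = {z \<in> Pow X. z \<prec> x}"
  have A_eq': "A = insert (X - x) P"
    unfolding P_def by (rule A_eq)
  have "initial_segment X (insert x P)"
    unfolding P_def using x(1) by (rule initial_segment_insert_predecessors)
  moreover have "card (insert x P) = card A"
  proof -
    have "finite P"
      unfolding P_def using X by simp
    moreover have "x \<notin> P" "X - x \<notin> P"
      unfolding P_def using x(2) simplicial_less_irrefl simplicial_less_asym by blast+
    ultimately show ?thesis
      unfolding A_eq' by simp
  qed
  moreover have "card (nbhd1 X (insert x P)) \<le> card (nbhd1 X A)"
  proof (cases "x = {}")
    case True
    then have "P = {}"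
      unfolding P_def using X not_simplicial_less_empty by (auto intro: finite_subset)
    then have "A = (-) X ` {x}"
      unfolding A_eq' using True by simp
    then show ?thesis
      using card_nbhd1_compl_image[of "{x}" X] x(1) \<open>P = {}\<close> by simp
  next
    case False
    have "nbhd1 X {x} \<subseteq> nbhd1 X A"
      unfolding A_eq using nbhd1_subset_if_predecessor_of_compl[OF X x(1) False x(2) between] .
    moreover have "nbhd1 X P \<subseteq> nbhd1 X A"
      unfolding A_eq' by (rule nbhd1_mono) blast
    ultimately have "nbhd1 X (insert x P) \<subseteq> nbhd1 X A"
      unfolding insert_is_Un[of x P] nbhd1_Un by (rule Un_least)
    then show ?thesis
      using finite_nbhd1[OF X] by (rule card_mono[rotated])
  qed
  ultimately show ?thesis
    using that by blast
qed

lemma exists_compressed_nbhd1_le: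
  assumes X: "finite X" and A: "A \<subseteq> Pow X"
    and harper_subcube: "\<And>i B S. i \<in> X \<Longrightarrow> B \<subseteq> Pow (X - {i}) \<Longrightarrow> initial_segment (X - {i}) S \<Longrightarrow>
      card S = card B \<Longrightarrow> card (nbhd1 (X - {i}) S) \<le> card (nbhd1 (X - {i}) B)"
  obtains A0 where "A0 \<subseteq> Pow X" "compressed X A0" "card A0 = card A" "card (nbhd1 X A0) \<le> card (nbhd1 X A)"
proof -
  define candidates where
    "candidates = {A'. A' \<subseteq> Pow X \<and> card A' = card A \<and> card (nbhd1 X A') \<le> card (nbhd1 X A)}"
  have "A \<in> candidates"
    unfolding candidates_def using A by simp
  then obtain A0 where A0: "A0 \<in> candidates"
    and minimal: "\<And>A'. A' \<in> candidates \<Longrightarrow> sum (rank X) A0 \<le> sum (rank X) A'"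
    using ex_has_least_nat[of "\<lambda>A'. A' \<in> candidates" A "sum (rank X)"] by blast
  have A0X: "A0 \<subseteq> Pow X"
    using A0 unfolding candidates_def by blast
  have fixed: "compress X i A0 = A0" if i: "i \<in> X" for i
  proof (rule ccontr)
    assume "compress X i A0 \<noteq> A0"
    then have "sum (rank X) (compress X i A0) < sum (rank X) A0"
      by (rule sum_rank_compress_less[OF X i A0X])
    moreover have "card (nbhd1 X (compress X i A0)) \<le> card (nbhd1 X A0)"
      using X i A0X harper_subcube[OF i] by (rule card_nbhd1_compress_le)
    then have "compress X i A0 \<in> candidates"
      using A0 compress_subset_Pow[OF i] card_compress[OF X i A0X] unfolding candidates_def by auto
    ultimately show False
      using minimal by fastforce
  qed
  have "compressed X A0"
    unfolding compressed_def
  proof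
    fix i assume i: "i \<in> X"
    have "initial_segment (X - {i}) (first_subsets (X - {i}) m)" for m
      using X by (simp add: initial_segment_first_subsets)
    then show "initial_segment (X - {i}) (lower i A0) \<and> initial_segment (X - {i}) (upper i A0)"
      using fixed[OF i] lower_compress[of i X A0] upper_compress[of i X A0] by metis
  qed
  then show ?thesis
    using that A0X A0 unfolding candidates_def by blast
qed

theorem harper_same_card:
  assumes "finite X" "A \<subseteq> Pow X" "initial_segment X S" "card S = card A"
  shows "card (nbhd1 X S) \<le> card (nbhd1 X A)"
  using assms
proof (induction "card X" arbitrary: X A S rule: less_induct)
  case less
  note X = less.prems(1) and A = less.prems(2)
  have "card (nbhd1 (X - {i}) S) \<le> card (nbhd1 (X - {i}) B)"
    if "i \<in> X" "B \<subseteq> Pow (X - {i})" "initial_segment (X - {i}) S" "card S = card B" for i B S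
    using less.hyps[of "X - {i}"] card_Diff1_less[OF X] X that by simp
  then obtain A0 where A0: "A0 \<subseteq> Pow X" "compressed X A0" "card A0 = card A"
    "card (nbhd1 X A0) \<le> card (nbhd1 X A)"
    using exists_compressed_nbhd1_le[OF X A] by blast
  obtain S' where S': "initial_segment X S'" "card S' = card A0" "card (nbhd1 X S') \<le> card (nbhd1 X A0)"
    using compressed_exists_initial_segment[OF X A0(1,2)] by blast
  have "S' = S"
    using initial_segment_unique[OF X S'(1) less.prems(3)] S'(2) A0(3) less.prems(4) by simp
  then show ?case
    using S'(3) A0(4) by simp
qed

theorem harper:
  assumes X: "finite X" and A: "A \<subseteq> Pow X" and S: "initial_segment X S" and card: "card S \<le> card A"
  shows "card (nbhd1 X S) \<le> card (nbhd1 X A)"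
proof -
  define T where "T = first_subsets X (card A)"
  have "card A \<le> 2 ^ card X"
    using card_mono[OF _ A] X by (simp add: card_Pow)
  then have T: "initial_segment X T" "card T = card A"
    unfolding T_def using X by (simp_all add: initial_segment_first_subsets card_first_subsets)
  then have "S \<subseteq> T"
    using initial_segment_subset[OF X S] card by simp
  then have "card (nbhd1 X S) \<le> card (nbhd1 X T)"
    using finite_nbhd1[OF X] by (intro card_mono nbhd1_mono)
  also have "\<dots> \<le> card (nbhd1 X A)"
    using X A T by (rule harper_same_card)
  finally show ?thesis .
qed

section \<open>Iterated neighbourhoods in the cube\<close>

lemma hdist_flip:
  assumes "finite x" "finite y"
  shows "hdist (flip j x) y = (if j \<in> sym_diff x y then hdist x y - 1 else Suc (hdist x y))"
  unfolding hdist_def sym_diff_flip using assms by (simp add: card_flip)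

lemma finite_cube_elem: "x \<in> cube n \<Longrightarrow> finite x"
  unfolding cube_def by (auto intro: finite_subset)

lemma nbhd_subset_cube: "nbhd n t A \<subseteq> cube n"
  unfolding nbhd_def by blast

lemma card_cube: "card (cube n) = 2 ^ n"
  unfolding cube_def by (simp add: card_Pow)

lemma card_cube_Diff: "A \<subseteq> cube n \<Longrightarrow> card (cube n - A) = 2 ^ n - card A"
  by (metis card_Diff_subset card_cube finite_Pow_iff finite_atLeastAtMost finite_subset cube_def)

lemma nbhd_0:
  assumes "A \<subseteq> cube n"
  shows "nbhd n 0 A = A"
proof -
  have "hdist x y = 0 \<longleftrightarrow> x = y" if "x \<in> cube n" "y \<in> cube n" for x y
    using finite_cube_elem[OF that(1)] finite_cube_elem[OF that(2)] unfolding hdist_def by auto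
  then show ?thesis
    unfolding nbhd_def using assms by fastforce
qed

lemma nbhd_Suc_subset:
  assumes A: "A \<subseteq> cube n"
  shows "nbhd n (Suc t) A \<subseteq> nbhd1 {1..n} (nbhd n t A)"
proof
  have sub: "nbhd n t A \<subseteq> Pow {1..n}"
    using nbhd_subset_cube unfolding cube_def .
  fix x assume "x \<in> nbhd n (Suc t) A"
  then obtain y where x: "x \<in> cube n" and y: "y \<in> A" "hdist x y \<le> Suc t"
    unfolding nbhd_def by blast
  have fin: "finite x" "finite y"
    using x y(1) A finite_cube_elem by blast+
  show "x \<in> nbhd1 {1..n} (nbhd n t A)"
  proof (cases "hdist x y \<le> t")
    case True
    then show ?thesis
      using x y(1) subset_nbhd1[OF sub] unfolding nbhd_def by blast
  next
    case False
    then have "sym_diff x y \<noteq> {}"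
      unfolding hdist_def by auto
    then obtain j where j: "j \<in> sym_diff x y"
      by blast
    then have "j \<in> {1..n}"
      using x y(1) A unfolding cube_def by blast
    moreover have "flip j x \<in> nbhd n t A"
    proof -
      have "flip j x \<in> cube n"
        using x flip_subset[of x "{1..n}" j] \<open>j \<in> {1..n}\<close> unfolding cube_def by simp
      moreover have "hdist (flip j x) y \<le> t"
        using hdist_flip[OF fin, of j] j y(2) by simp
      ultimately show ?thesis
        using y(1) unfolding nbhd_def by blast
    qed
    ultimately show ?thesis
      using flip_in_nbhd1[OF _ sub, of "flip j x" j] by simp
  qed
qed

lemma nbhd1_nbhd_subset:
  assumes A: "A \<subseteq> cube n"
  shows "nbhd1 {1..n} (nbhd n t A) \<subseteq> nbhd n (Suc t) A"
proof
  fix x assume x: "x \<in> nbhd1 {1..n} (nbhd n t A)"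
  then have "x \<in> cube n"
    using nbhd1_subset_Pow unfolding cube_def by blast
  from x show "x \<in> nbhd n (Suc t) A"
  proof (cases rule: nbhd1E)
    case 1
    then show ?thesis
      unfolding nbhd_def using le_SucI by blast
  next
    case (2 z j)
    then obtain y where z: "z \<in> cube n" and y: "y \<in> A" "hdist z y \<le> t"
      unfolding nbhd_def by blast
    have "finite y"
      using y(1) A finite_cube_elem by blast
    then have "hdist (flip j z) y \<le> Suc (hdist z y)"
      using hdist_flip[OF finite_cube_elem[OF z], of y j] by (simp add: le_SucI)
    then have "hdist x y \<le> Suc t"
      using y(2) 2(3) by simp
    then show ?thesis
      unfolding nbhd_def using \<open>x \<in> cube n\<close> y(1) by blast
  qed
qed

lemma nbhd_Suc: "A \<subseteq> cube n \<Longrightarrow> nbhd n (Suc t) A = nbhd1 {1..n} (nbhd n t A)"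
  using nbhd_Suc_subset nbhd1_nbhd_subset by (rule equalityI)

lemma nbhd_eq_funpow: "A \<subseteq> cube n \<Longrightarrow> nbhd n t A = (nbhd1 {1..n} ^^ t) A"
  by (induction t) (simp_all add: nbhd_0 nbhd_Suc)

lemma funpow_nbhd1_subset_Pow: "A \<subseteq> Pow X \<Longrightarrow> (nbhd1 X ^^ t) A \<subseteq> Pow X"
  by (induction t) (simp_all add: nbhd1_subset_Pow)

lemma funpow_nbhd1_compl_image:
  "A \<subseteq> Pow X \<Longrightarrow> (nbhd1 X ^^ t) ((-) X ` A) = (-) X ` (nbhd1 X ^^ t) A"
  by (induction t) (simp_all add: nbhd1_compl_image funpow_nbhd1_subset_Pow)

lemma nbhd_compl_image:
  assumes "A \<subseteq> cube n"
  shows "nbhd n t ((-) {1..n} ` A) = (-) {1..n} ` nbhd n t A"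
proof -
  have "(-) {1..n} ` A \<subseteq> cube n"
    unfolding cube_def by blast
  then show ?thesis
    using assms by (simp add: nbhd_eq_funpow funpow_nbhd1_compl_image cube_def)
qed

lemma harper_funpow:
  assumes X: "finite X" and A: "A \<subseteq> Pow X" and S: "initial_segment X S" and card: "card S \<le> card A"
  shows "card ((nbhd1 X ^^ t) S) \<le> card ((nbhd1 X ^^ t) A)"
proof (induction t)
  case 0
  then show ?case
    using card by simp
next
  case (Suc t)
  have "initial_segment X ((nbhd1 X ^^ t) S)"
    by (induction t) (simp_all add: S nbhd1_initial_segment[OF X])
  then show ?case
    using harper[OF X funpow_nbhd1_subset_Pow[OF A]] Suc.IH by simp
qed

lemma nbhd_minimal_initial_segment:
  assumes "initial_segment {1..n} S"
  shows "nbhd_minimal n t S"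
proof -
  have "S \<subseteq> cube n"
    using assms unfolding initial_segment_def cube_def by blast
  then show ?thesis
    unfolding nbhd_minimal_def using harper_funpow[OF _ _ assms] by (simp add: nbhd_eq_funpow cube_def)
qed

lemma nbhd_minimal_if_le:
  assumes "nbhd_minimal n t S" "card A = card S" "card (nbhd n t A) \<le> card (nbhd n t S)"
  shows "nbhd_minimal n t A"
  using assms unfolding nbhd_minimal_def by (metis order_trans)

section \<open>The sets B_r\<close>

(* half_ball n (Suc r) is T_r; indexing by the size k of the partial layer makes half_ball n 0 = {}
   the value below radius 0, so that truncated subtraction k - t needs no case distinction. *)
definition half_ball :: "nat \<Rightarrow> nat \<Rightarrow> nat set set" where
  "half_ball n k = {x \<in> cube n. card x < k \<or> (card x = k \<and> 1 \<in> x)}"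

lemma half_ball_initial_segment: "initial_segment {1..n} (half_ball n k)"
  unfolding initial_segment_def
proof (intro conjI ballI impI)
  show "half_ball n k \<subseteq> Pow {1..n}"
    unfolding half_ball_def cube_def by blast
  fix v u assume v: "v \<in> half_ball n k" and u: "u \<in> Pow {1..n}" and uv: "u \<prec> v"
  show "u \<in> half_ball n k"
  proof (cases "card u < card v")
    case True
    then show ?thesis
      using v u unfolding half_ball_def cube_def by auto
  next
    case False
    then have card_eq: "card u = card v" and "lex_before u v"
      using uv unfolding simplicial_less_def by auto
    then obtain a where a: "a \<in> u" "a \<notin> v" "\<forall>b<a. b \<in> u \<longleftrightarrow> b \<in> v"
      unfolding lex_before_def by blast
    have "1 \<in> u" if "1 \<in> v"
    proof -
      have "1 < a"
        using a(1,2) u that by (metis PowD atLeastAtMost_iff le_neq_implies_less subsetD)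
      then show ?thesis
        using a(3) that by blast
    qed
    then show ?thesis
      using v u card_eq unfolding half_ball_def cube_def by auto
  qed
qed

lemma half_ball_subset_cube: "half_ball n k \<subseteq> cube n"
  unfolding half_ball_def by blast

lemma nbhd1_half_ball_subset: "nbhd1 {1..n} (half_ball n k) \<subseteq> half_ball n (Suc k)"
proof
  fix x assume x: "x \<in> nbhd1 {1..n} (half_ball n k)"
  then have "x \<in> cube n"
    using nbhd1_subset_Pow unfolding cube_def by blast
  from x show "x \<in> half_ball n (Suc k)"
  proof (cases rule: nbhd1E)
    case 1
    then show ?thesis
      unfolding half_ball_def by auto
  next
    case (2 y j)
    have "finite y"
      using 2(1) finite_cube_elem unfolding half_ball_def by blast
    have "card y < k \<or> card y = k \<and> 1 \<in> y"
      using 2(1) unfolding half_ball_def by blast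
    moreover have "card x = (if j \<in> y then card y - 1 else Suc (card y))"
      using 2(3) card_flip[OF \<open>finite y\<close>] by simp
    moreover have "1 \<in> y \<Longrightarrow> j \<notin> y \<Longrightarrow> 1 \<in> x"
      using 2(3) unfolding flip_def by simp
    ultimately show ?thesis
      using \<open>x \<in> cube n\<close> unfolding half_ball_def by (auto split: if_splits)
  qed
qed

lemma half_ball_Suc_subset_nbhd1: "half_ball n (Suc (Suc k)) \<subseteq> nbhd1 {1..n} (half_ball n (Suc k))"
proof
  fix x assume x: "x \<in> half_ball n (Suc (Suc k))"
  have sub: "half_ball n (Suc k) \<subseteq> Pow {1..n}"
    using half_ball_subset_cube unfolding cube_def .
  have xX: "x \<subseteq> {1..n}" and fx: "finite x"
    using x finite_cube_elem unfolding half_ball_def cube_def by blast+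
  show "x \<in> nbhd1 {1..n} (half_ball n (Suc k))"
  proof (cases "x \<in> half_ball n (Suc k)")
    case True
    then show ?thesis
      using subset_nbhd1[OF sub] by blast
  next
    case False
    then have x_cases: "(card x = Suc k \<and> 1 \<notin> x) \<or> (card x = Suc (Suc k) \<and> 1 \<in> x)"
      using x unfolding half_ball_def by auto
    then have "\<not> x \<subseteq> {1}"
      by (metis card.empty card.insert finite.emptyI insert_absorb nat.inject old.nat.distinct(1)
          singletonI subset_singletonD)
    then obtain i where i: "i \<in> x" "i \<noteq> 1"
      by blast
    have "card (x - {i}) = card x - 1"
      using fx i(1) by simp
    then have "x - {i} \<in> half_ball n (Suc k)"
      using x_cases i xX unfolding half_ball_def cube_def by auto
    moreover have "x = flip i (x - {i})"
      using i(1) unfolding flip_def by auto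
    moreover have "i \<in> {1..n}"
      using i(1) xX by blast
    ultimately show ?thesis
      using flip_in_nbhd1[OF _ sub] by metis
  qed
qed

lemma nbhd1_half_ball: "nbhd1 {1..n} (half_ball n (Suc k)) = half_ball n (Suc (Suc k))"
  using nbhd1_half_ball_subset half_ball_Suc_subset_nbhd1 by (rule equalityI)

lemma nbhd_half_ball: "nbhd n t (half_ball n (Suc k)) = half_ball n (Suc k + t)"
proof (induction t)
  case 0
  show ?case
    by (simp add: nbhd_0 half_ball_subset_cube)
next
  case (Suc t)
  then show ?case
    by (simp only: nbhd_Suc[OF half_ball_subset_cube] add_Suc add_Suc_right nbhd1_half_ball)
qed

lemma exists_insert_notin_half_ball:
  assumes k: "k < n" and x: "x \<in> half_ball n k" "x \<notin> half_ball n (k - 1)"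
  obtains j where "j \<in> {1..n}" "j \<notin> x" "insert j x \<notin> half_ball n k"
proof -
  have fx: "finite x"
    using x(1) finite_cube_elem unfolding half_ball_def by blast
  have x_cases: "card x = k - 1 \<and> 1 \<notin> x \<and> 0 < k \<or> card x = k \<and> 1 \<in> x"
    using x unfolding half_ball_def by auto
  then have "card (insert 1 x) = k"
    using fx by (auto simp: insert_absorb)
  have "\<not> {1..n} \<subseteq> insert 1 x"
  proof
    assume "{1..n} \<subseteq> insert 1 x"
    then have "card {1..n} \<le> card (insert 1 x)"
      using fx by (intro card_mono) simp_all
    then show False
      using \<open>card (insert 1 x) = k\<close> k by simp
  qed
  then obtain j where j: "j \<in> {1..n}" "j \<notin> insert 1 x"
    by blast
  moreover have "insert j x \<notin> half_ball n k"
    using x_cases fx j(2) unfolding half_ball_def by auto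
  ultimately show ?thesis
    using that by blast
qed

lemma compl_half_ball_subset_nbhd1:
  assumes "k < n"
  shows "cube n - half_ball n (k - 1) \<subseteq> nbhd1 {1..n} (cube n - half_ball n k)"
proof
  fix x assume x: "x \<in> cube n - half_ball n (k - 1)"
  have sub: "cube n - half_ball n k \<subseteq> Pow {1..n}"
    unfolding cube_def by blast
  show "x \<in> nbhd1 {1..n} (cube n - half_ball n k)"
  proof (cases "x \<in> half_ball n k")
    case False
    then show ?thesis
      using x subset_nbhd1[OF sub] by blast
  next
    case True
    then obtain j where j: "j \<in> {1..n}" "j \<notin> x" "insert j x \<notin> half_ball n k"
      using exists_insert_notin_half_ball[OF assms] x by blast
    then have "insert j x \<in> cube n - half_ball n k"
      using x unfolding cube_def by blast
    moreover have "x = flip j (insert j x)"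
      using j(2) unfolding flip_def by auto
    ultimately show ?thesis
      using flip_in_nbhd1[OF _ sub j(1)] by metis
  qed
qed

lemma compl_half_ball_subset_nbhd:
  assumes "k < n"
  shows "cube n - half_ball n (k - t) \<subseteq> nbhd n t (cube n - half_ball n k)"
proof (induction t)
  case 0
  have "cube n - half_ball n k \<subseteq> cube n"
    by blast
  then show ?case
    by (simp add: nbhd_0)
next
  case (Suc t)
  have "k - t < n"
    using assms by simp
  then have "cube n - half_ball n (k - Suc t) \<subseteq> nbhd1 {1..n} (cube n - half_ball n (k - t))"
    using compl_half_ball_subset_nbhd1[of "k - t" n] by simp
  also have "\<dots> \<subseteq> nbhd1 {1..n} (nbhd n t (cube n - half_ball n k))"
    using Suc.IH by (rule nbhd1_mono)
  also have "\<dots> = nbhd n (Suc t) (cube n - half_ball n k)"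
    by (rule nbhd_Suc[symmetric]) blast
  finally show ?case .
qed

lemma card_half_ball:
  assumes "1 \<le> n"
  shows "card (half_ball n (Suc r)) = (\<Sum>j=0..r. n choose j) + ((n - 1) choose r)"
proof -
  define layer where "layer j = {x. x \<subseteq> {1..n} \<and> card x = j}" for j
  define top where "top = {x \<in> cube n. card x = Suc r \<and> 1 \<in> x}"
  have fin: "finite (layer j)" "finite top" for j
    unfolding layer_def top_def cube_def by simp_all
  have split: "half_ball n (Suc r) = (\<Union>j\<in>{0..r}. layer j) \<union> top"
    unfolding half_ball_def layer_def top_def cube_def by (auto simp: less_Suc_eq_le)
  have disjoint: "(\<Union>j\<in>{0..r}. layer j) \<inter> top = {}"
    unfolding layer_def top_def by auto
  have "card (\<Union>j\<in>{0..r}. layer j) = (\<Sum>j=0..r. card (layer j))"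
    by (rule card_UN_disjoint) (auto simp: fin layer_def)
  also have "\<dots> = (\<Sum>j=0..r. n choose j)"
    unfolding layer_def by (simp add: n_subsets)
  finally have card_layers: "card (\<Union>j\<in>{0..r}. layer j) = (\<Sum>j=0..r. n choose j)" .
  have "lower 1 top = {}"
    unfolding lower_def top_def by blast
  moreover have "upper 1 top = {w. w \<subseteq> {1..n} - {1} \<and> card w = r}"
  proof (rule set_eqI)
    fix w
    show "w \<in> upper 1 top \<longleftrightarrow> w \<in> {w. w \<subseteq> {1..n} - {1} \<and> card w = r}"
    proof (cases "w \<subseteq> {1..n} - {1}")
      case True
      then have "finite w" "1 \<notin> w"
        using finite_subset by blast+
      then show ?thesis
        unfolding mem_upper_iff top_def cube_def using True assms by auto
    next
      case False
      then show ?thesis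
        unfolding mem_upper_iff top_def cube_def by blast
    qed
  qed
  ultimately have "card top = (n - 1) choose r"
    using card_lower_upper[OF fin(2), of 1] n_subsets[of "{1..n} - {1}" r] assms by simp
  then show ?thesis
    using split disjoint card_layers fin by (simp add: card_Un_disjoint)
qed

lemma Bset_Diff_half_ball:
  assumes "2 \<le> n"
  shows "Bset n r - half_ball n (Suc r) = insert 2 ` (half_ball n (Suc r) - Bset n r)"
proof -
  define D where "D = {x \<in> cube n. card x = Suc r \<and> 1 \<in> x \<and> 2 \<notin> x}"
  have "half_ball n (Suc r) - Bset n r = D"
    unfolding Bset_def half_ball_def D_def by auto
  moreover have "Bset n r - half_ball n (Suc r) = {x \<in> cube n. card x = Suc (Suc r) \<and> {1, 2} \<subseteq> x}"
    unfolding Bset_def half_ball_def by auto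
  moreover have "{x \<in> cube n. card x = Suc (Suc r) \<and> {1, 2} \<subseteq> x} = insert 2 ` D"
  proof
    show "insert 2 ` D \<subseteq> {x \<in> cube n. card x = Suc (Suc r) \<and> {1, 2} \<subseteq> x}"
    proof
      fix x assume "x \<in> insert 2 ` D"
      then obtain y where y: "y \<in> D" "x = insert 2 y"
        by blast
      then have "finite y"
        unfolding D_def using finite_cube_elem by blast
      then show "x \<in> {x \<in> cube n. card x = Suc (Suc r) \<and> {1, 2} \<subseteq> x}"
        using y assms unfolding D_def cube_def by auto
    qed
    show "{x \<in> cube n. card x = Suc (Suc r) \<and> {1, 2} \<subseteq> x} \<subseteq> insert 2 ` D"
    proof
      fix x assume x: "x \<in> {x \<in> cube n. card x = Suc (Suc r) \<and> {1, 2} \<subseteq> x}"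
      then have "finite x"
        using finite_cube_elem by blast
      then have "x - {2} \<in> D"
        using x unfolding D_def cube_def by auto
      moreover have "x = insert 2 (x - {2})"
        using x by auto
      ultimately show "x \<in> insert 2 ` D"
        by blast
    qed
  qed
  ultimately show ?thesis
    by simp
qed

lemma card_Bset:
  assumes "2 \<le> n"
  shows "card (Bset n r) = card (half_ball n (Suc r))"
proof -
  let ?B = "Bset n r" and ?H = "half_ball n (Suc r)"
  have fin: "finite ?B" "finite ?H"
    unfolding Bset_def half_ball_def cube_def by simp_all
  have "inj_on (insert 2) (?H - ?B)"
  proof (rule inj_onI)
    fix a b assume "a \<in> ?H - ?B" "b \<in> ?H - ?B" "insert 2 a = insert 2 b"
    moreover have "2 \<notin> a" "2 \<notin> b"
      using \<open>a \<in> ?H - ?B\<close> \<open>b \<in> ?H - ?B\<close> unfolding Bset_def half_ball_def by auto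
    ultimately show "a = b"
      using insert_ident by metis
  qed
  then have "card (?B - ?H) = card (?H - ?B)"
    unfolding Bset_Diff_half_ball[OF assms] by (rule card_image)
  then show ?thesis
    using card_Int_Diff[OF fin(1), of ?H] card_Int_Diff[OF fin(2), of ?B] by (simp add: Int_commute)
qed

lemma nbhd1_Bset: "nbhd1 {1..n} (Bset n s) \<subseteq> Bset n (Suc s)"
proof
  fix x assume x: "x \<in> nbhd1 {1..n} (Bset n s)"
  then have "x \<in> cube n"
    using nbhd1_subset_Pow unfolding cube_def by blast
  from x show "x \<in> Bset n (Suc s)"
  proof (cases rule: nbhd1E)
    case 1
    then show ?thesis
      unfolding Bset_def by auto
  next
    case (2 y j)
    have "finite y"
      using 2(1) finite_cube_elem unfolding Bset_def by blast
    have "card y \<le> s \<or> (card y = s + 1 \<or> card y = s + 2) \<and> {1, 2} \<subseteq> y"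
      using 2(1) unfolding Bset_def by blast
    moreover have "card x = (if j \<in> y then card y - 1 else Suc (card y))"
      using 2(3) card_flip[OF \<open>finite y\<close>] by simp
    moreover have "j \<notin> y \<Longrightarrow> y \<subseteq> x"
      using 2(3) unfolding flip_def by auto
    ultimately show ?thesis
      using \<open>x \<in> cube n\<close> unfolding Bset_def by (auto split: if_splits)
  qed
qed

lemma Bset_subset_cube: "Bset n r \<subseteq> cube n"
  unfolding Bset_def by blast

lemma Bset_eq_cube:
  assumes "2 \<le> n"
  shows "Bset n (n - 1) = cube n"
proof
  show "Bset n (n - 1) \<subseteq> cube n"
    by (rule Bset_subset_cube)
  show "cube n \<subseteq> Bset n (n - 1)"
  proof
    fix x assume x: "x \<in> cube n"
    then have "card x \<le> n"
      unfolding cube_def using card_mono[of "{1..n}" x] by simp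
    show "x \<in> Bset n (n - 1)"
    proof (cases "card x \<le> n - 1")
      case True
      then show ?thesis
        using x unfolding Bset_def by blast
    next
      case False
      then have "card x = n"
        using \<open>card x \<le> n\<close> by simp
      then have "x = {1..n}"
        using x card_subset_eq[of "{1..n}" x] unfolding cube_def by simp
      then show ?thesis
        using x \<open>card x = n\<close> assms unfolding Bset_def by auto
    qed
  qed
qed

lemma nbhd_Bset: "nbhd n t (Bset n r) \<subseteq> Bset n (r + t)"
proof (induction t)
  case 0
  then show ?case
    by (simp add: nbhd_0 Bset_subset_cube)
next
  case (Suc t)
  then have "nbhd1 {1..n} (nbhd n t (Bset n r)) \<subseteq> Bset n (Suc (r + t))"
    using nbhd1_mono nbhd1_Bset by blast
  then show ?case
    by (simp add: nbhd_Suc Bset_subset_cube)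
qed

lemma nbhd_compl_Bset: "t \<le> r \<Longrightarrow> nbhd n t (cube n - Bset n r) \<subseteq> cube n - Bset n (r - t)"
proof (induction t)
  case 0
  then show ?case
    by (simp add: nbhd_0)
next
  case (Suc t)
  have "nbhd1 {1..n} (Bset n (r - Suc t)) \<subseteq> Bset n (r - t)"
    using nbhd1_Bset Suc.prems by (metis Suc_diff_Suc Suc_le_lessD)
  then have "nbhd1 {1..n} (cube n - Bset n (r - t)) \<subseteq> cube n - Bset n (r - Suc t)"
    using nbhd1_Diff_subset[of "Bset n (r - Suc t)" "{1..n}"] Bset_subset_cube unfolding cube_def by blast
  moreover have "nbhd1 {1..n} (nbhd n t (cube n - Bset n r)) \<subseteq> nbhd1 {1..n} (cube n - Bset n (r - t))"
    using Suc by (intro nbhd1_mono) simp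
  ultimately show ?case
    by (simp add: nbhd_Suc)
qed

lemma card_nbhd_compl_Bset_le:
  assumes "2 \<le> n"
  shows "card (nbhd n t (cube n - Bset n r)) \<le> 2 ^ n - card (half_ball n (Suc r - t))"
proof (cases "t \<le> r")
  case True
  have "card (nbhd n t (cube n - Bset n r)) \<le> card (cube n - Bset n (r - t))"
    using nbhd_compl_Bset[OF True] by (rule card_mono[rotated]) (simp add: cube_def)
  also have "\<dots> = 2 ^ n - card (Bset n (r - t))"
    using Bset_subset_cube by (rule card_cube_Diff)
  also have "\<dots> = 2 ^ n - card (half_ball n (Suc r - t))"
    using card_Bset[OF assms] True by (simp add: Suc_diff_le)
  finally show ?thesis .
next
  case False
  then have "half_ball n (Suc r - t) = {}"
    unfolding half_ball_def using finite_cube_elem by (auto simp: card_gt_0_iff)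
  moreover have "card (nbhd n t (cube n - Bset n r)) \<le> card (cube n)"
    using nbhd_subset_cube by (rule card_mono[rotated]) (simp add: cube_def)
  ultimately show ?thesis
    by (simp add: card_cube)
qed

lemma nbhd_minimal_Bset:
  assumes "2 \<le> n"
  shows "nbhd_minimal n t (Bset n r)"
proof (rule nbhd_minimal_if_le)
  show "nbhd_minimal n t (half_ball n (Suc r))"
    by (rule nbhd_minimal_initial_segment[OF half_ball_initial_segment])
  show "card (Bset n r) = card (half_ball n (Suc r))"
    using assms by (rule card_Bset)
  have "card (nbhd n t (Bset n r)) \<le> card (Bset n (r + t))"
    using nbhd_Bset by (rule card_mono[rotated]) (simp add: Bset_def cube_def)
  also have "\<dots> = card (nbhd n t (half_ball n (Suc r)))"
    using card_Bset[OF assms] by (simp add: nbhd_half_ball)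
  finally show "card (nbhd n t (Bset n r)) \<le> card (nbhd n t (half_ball n (Suc r)))" .
qed

lemma nbhd_minimal_compl_Bset:
  assumes n: "2 \<le> n" and r: "r + 2 \<le> n"
  shows "nbhd_minimal n t (cube n - Bset n r)"
proof (rule nbhd_minimal_if_le)
  let ?X = "{1..n :: nat}"
  define F where "F = cube n - half_ball n (Suc r)"
  have F: "F \<subseteq> Pow ?X"
    unfolding F_def cube_def by blast
  have "initial_segment ?X ((-) ?X ` (Pow ?X - half_ball n (Suc r)))"
    using half_ball_initial_segment by (intro initial_segment_compl_image) simp_all
  then show "nbhd_minimal n t ((-) ?X ` F)"
    unfolding F_def cube_def by (rule nbhd_minimal_initial_segment)
  have "card (cube n - Bset n r) = card (cube n - half_ball n (Suc r))"
    using card_Bset[OF n] card_cube_Diff[OF Bset_subset_cube] card_cube_Diff[OF half_ball_subset_cube] by simp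
  then show "card (cube n - Bset n r) = card ((-) ?X ` F)"
    using card_compl_image[OF F] unfolding F_def by simp
  have "card (nbhd n t (cube n - Bset n r)) \<le> 2 ^ n - card (half_ball n (Suc r - t))"
    using n by (rule card_nbhd_compl_Bset_le)
  also have "\<dots> = card (cube n - half_ball n (Suc r - t))"
    using card_cube_Diff[OF half_ball_subset_cube] by simp
  also have "\<dots> \<le> card (nbhd n t F)"
    unfolding F_def using compl_half_ball_subset_nbhd[of "Suc r" n t] r
    by (intro card_mono) (simp_all add: nbhd_def cube_def)
  also have "\<dots> = card (nbhd n t ((-) ?X ` F))"
    unfolding nbhd_compl_image[OF F[folded cube_def]]
    using nbhd_subset_cube[unfolded cube_def] by (rule card_compl_image[symmetric])
  finally show "card (nbhd n t (cube n - Bset n r)) \<le> card (nbhd n t ((-) ?X ` F))" .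
qed

theorem mainTheorem2:
  fixes n r :: nat
  assumes "n \<ge> 2" and "r \<le> n - 1"
  shows "card (Bset n r) = (\<Sum>j=0..r. n choose j) + ((n - 1) choose r)
         \<and> extremal n (Bset n r)"
proof
  show "card (Bset n r) = (\<Sum>j=0..r. n choose j) + ((n - 1) choose r)"
    using card_Bset card_half_ball assms(1) by simp
  have "nbhd_minimal n t (cube n - Bset n r)" for t
  proof (cases "r + 2 \<le> n")
    case True
    with assms(1) show ?thesis
      by (rule nbhd_minimal_compl_Bset)
  next
    case False
    then have "r = n - 1"
      using assms(2) by simp
    then have empty: "cube n - Bset n r = {}"
      using Bset_eq_cube[OF assms(1)] by simp
    have "nbhd n t {} = {}"
      unfolding nbhd_def by simp
    then show ?thesis
      unfolding nbhd_minimal_def empty by simp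
  qed
  then show "extremal n (Bset n r)"
    unfolding extremal_def using nbhd_minimal_Bset[OF assms(1)] by blast
qed

end
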